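(* Let $\mathcal{L}=(L,\wedge,\vee,0,1)$ be a complete lattice. If $p\in L$ is strongly irreducible in $L$, then $p$ is weakly $\wedge$-distributive in $L$.
   Context: $p$ is strongly irreducible if for all $a,b\in L$: $a\wedge b\leq p$ implies $a\leq p$ or $b\leq p$. $p$ is weakly $\wedge$-distributive if whenever $x,y\in L$ satisfy $x\wedge y=0$, one has $p=(x\vee p)\wedge(y\vee p)$. *)

theory Defs
  imports Main
begin

definition strongly_irreducible :: "'a::complete_lattice \<Rightarrow> bool" where
  "strongly_irreducible p \<longleftrightarrow> (\<forall>a b. inf a b \<le> p \<longrightarrow> a \<le> p \<or> b \<le> p)"

definition weakly_inf_distributive :: "'a::complete_lattice \<Rightarrow> bool" where
  "weakly_inf_distributive p \<longleftrightarrow>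
     (\<forall>x y. inf x y = bot \<longrightarrow> p = inf (sup x p) (sup y p))"

end

theory Submission
  imports Defs
begin

lemma inf_sup_absorb_if_le:
  fixes p x y :: "'a::lattice"
  assumes "x \<le> p \<or> y \<le> p"
  shows "inf (sup x p) (sup y p) = p"
  using assms by (auto simp: sup_absorb2 inf_absorb1 inf_absorb2)

lemma strongly_irreducible_le_cases:
  assumes "strongly_irreducible p" and "inf x y \<le> p"
  shows "x \<le> p \<or> y \<le> p"
  using assms unfolding strongly_irreducible_def by blast

theorem lemma1p10:
  fixes p :: "'a::complete_lattice"
  assumes "strongly_irreducible p"
  shows "weakly_inf_distributive p"
  unfolding weakly_inf_distributive_def
proof (intro allI impI)
  fix x y :: 'a
  assume "inf x y = bot"
  then have "x \<le> p \<or> y \<le> p"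
    using assms by (intro strongly_irreducible_le_cases) simp_all
  then show "p = inf (sup x p) (sup y p)"
    by (simp add: inf_sup_absorb_if_le)
qed

end
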